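(* (a) Let $(A,\succ_A,\prec_A)$ be an anti-pre-Leibniz algebra with sub-adjacent Leibniz algebra $(A,\circ_A)$. Then $A\oplus A^*$ with $$(x+a^* )\circ_d(y+b^* )=x\circ_A y-\mathcal L^*_{\succ_A}(x)b^*+(\mathcal L^*_{\succ_A}+\mathcal R^*_{\prec_A})(y)a^*$$ is a Leibniz algebra, and the bilinear form $\omega_p(x+a^*,y+b^* )=\langle x,b^*\rangle-\langle a^*,y\rangle$ is a nondegenerate skew-symmetric $2$-cocycle on it. (b) Conversely, let $(A,\circ_A)$ be a Leibniz algebra with a representation $(l,r,A^* )$, and consider the Leibniz algebra $A\oplus A^*$ with $(x+a^* )\circ_d(y+b^* )=x\circ_A y+l(x)b^*+r(y)a^*$. If $\omega_p$ (as in (a)) is a $2$-cocycle on this Leibniz algebra, then there is a compatible anti-pre-Leibniz algebra $(A,\succ_A,\prec_A)$ of $(A,\circ_A)$ such that $l=-\mathcal L^*_{\succ_A}$ and $r=\mathcal L^*_{\succ_A}+\mathcal R^*_{\prec_A}$.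
   Context: All vector spaces are finite-dimensional over a field $\mathbb K$ of characteristic zero. For a multiplication $\ast$, $\mathcal L_\ast(x)y=x\ast y$, $\mathcal R_\ast(x)y=y\ast x$; for $f:A\to\mathrm{End}(V)$, $f^*:A\to\mathrm{End}(V^* )$ is $\langle f^*(x)u^*,v\rangle=-\langle u^*,f(x)v\rangle$. A Leibniz algebra is a vector space $A$ with a multiplication $\circ_A$ satisfying $x\circ_A(y\circ_A z)=(x\circ_A y)\circ_A z+y\circ_A(x\circ_A z)$. A representation of $(A,\circ_A)$ is a triple $(l,r,V)$ with linear maps $l,r:A\to\mathrm{End}(V)$ such that for all $x,y\in A,v\in V$: $l(x\circ_A y)v=l(x)l(y)v-l(y)l(x)v$; $r(x\circ_A y)v=l(x)r(y)v-r(y)l(x)v$; $r(y)l(x)v=-r(y)r(x)v$ (equivalently, $x\circ_A y+l(x)v+r(y)u$ defines a Leibniz algebra on $A\oplus V$). A bilinear form $\omega$ on a Leibniz algebra $(B,\circ)$ is a $2$-cocycle if $\omega(z,x\circ y)=\omega(x,y\circ z+z\circ y)-\omega(y,x\circ z)$ for all $x,y,z\in B$. An anti-pre-Leibniz algebra is a vector space $A$ with multiplications $\succ_A,\prec_A$ such that, with $x\circ y=x\succ_A y+x\prec_A y$, for all $x,y,z$: (AL1) $(x\circ y)\prec_A z=x\succ_A(y\circ z)-y\succ_A(x\circ z)$; (AL2) $(x\circ y)\succ_A z=y\succ_A(x\succ_A z)-x\succ_A(y\succ_A z)$; (AL3) $x\prec_A(y\circ z)=(y\succ_A x)\prec_A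 z-y\succ_A(x\prec_A z)$; (AL4) $(x\succ_A y)\prec_A z=-(y\prec_A x)\prec_A z$. Its sub-adjacent Leibniz algebra is $(A,\circ_A)$ with $\circ_A=\succ_A+\prec_A$; a compatible anti-pre-Leibniz algebra of a Leibniz algebra $(A,\circ_A)$ is an anti-pre-Leibniz algebra $(A,\succ_A,\prec_A)$ with $\succ_A+\prec_A=\circ_A$. *)

theory Defs
  imports Main
begin

text \<open>Coordinate model: a finite-dimensional space A over the field 'k is 'n \<Rightarrow> 'k with
 'n a finite index type (a basis). The dual space A* is also modelled as 'n \<Rightarrow> 'k,
 with the natural pairing with respect to the dual basis. The direct sum A \<oplus> A* is
 ('n + 'n) \<Rightarrow> 'k: the Inl-coordinates give the A-component, the Inr-coordinates the A*-component.\<close>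

definition vzero :: "'n \<Rightarrow> 'k::field" where "vzero = (\<lambda>i. 0)"
definition vadd :: "('n \<Rightarrow> 'k::field) \<Rightarrow> ('n \<Rightarrow> 'k) \<Rightarrow> ('n \<Rightarrow> 'k)"
  where "vadd x y = (\<lambda>i. x i + y i)"
definition vneg :: "('n \<Rightarrow> 'k::field) \<Rightarrow> ('n \<Rightarrow> 'k)" where "vneg x = (\<lambda>i. - x i)"
definition vscale :: "'k::field \<Rightarrow> ('n \<Rightarrow> 'k) \<Rightarrow> ('n \<Rightarrow> 'k)" where "vscale c x = (\<lambda>i. c * x i)"

definition lin :: "(('n \<Rightarrow> 'k::field) \<Rightarrow> ('m \<Rightarrow> 'k)) \<Rightarrow> bool" where
  "lin f \<longleftrightarrow> (\<forall>x y. f (vadd x y) = vadd (f x) (f y)) \<and> (\<forall>c x. f (vscale c x) = vscale c (f x))"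

definition bilin :: "(('n \<Rightarrow> 'k::field) \<Rightarrow> ('m \<Rightarrow> 'k) \<Rightarrow> ('p \<Rightarrow> 'k)) \<Rightarrow> bool" where
  "bilin m \<longleftrightarrow> (\<forall>x. lin (m x)) \<and> (\<forall>y. lin (\<lambda>x. m x y))"

definition bilin_form :: "(('m \<Rightarrow> 'k::field) \<Rightarrow> ('m \<Rightarrow> 'k) \<Rightarrow> 'k) \<Rightarrow> bool" where
  "bilin_form w \<longleftrightarrow>
     (\<forall>x y z. w (vadd x y) z = w x z + w y z) \<and> (\<forall>c x z. w (vscale c x) z = c * w x z) \<and>
     (\<forall>x y z. w z (vadd x y) = w z x + w z y) \<and> (\<forall>c x z. w z (vscale c x) = c * w z x)"

definition dpair :: "('n::finite \<Rightarrow> 'k::field) \<Rightarrow> ('n \<Rightarrow> 'k) \<Rightarrow> 'k" where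
  "dpair x a = (\<Sum>i\<in>UNIV. x i * a i)"

definition unitv :: "'n \<Rightarrow> ('n \<Rightarrow> 'k::field)" where "unitv j = (\<lambda>i. if i = j then 1 else 0)"

text \<open>Dual map f*: A \<rightarrow> End(A*), \<langle>f*(x)u*, v\<rangle> = - \<langle>u*, f(x)v\<rangle>, written in dual-basis coordinates.\<close>
definition dual_op :: "(('n::finite \<Rightarrow> 'k::field) \<Rightarrow> ('n \<Rightarrow> 'k) \<Rightarrow> ('n \<Rightarrow> 'k))
     \<Rightarrow> ('n \<Rightarrow> 'k) \<Rightarrow> ('n \<Rightarrow> 'k) \<Rightarrow> ('n \<Rightarrow> 'k)" where
  "dual_op f x u = (\<lambda>j. - dpair (f x (unitv j)) u)"

definition Lmul :: "('a \<Rightarrow> 'b \<Rightarrow> 'c) \<Rightarrow> 'a \<Rightarrow> 'b \<Rightarrow> 'c" where "Lmul m x y = m x y"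
definition Rmul :: "('b \<Rightarrow> 'a \<Rightarrow> 'c) \<Rightarrow> 'a \<Rightarrow> 'b \<Rightarrow> 'c" where "Rmul m x y = m y x"

definition leibniz :: "(('n \<Rightarrow> 'k::field) \<Rightarrow> ('n \<Rightarrow> 'k) \<Rightarrow> ('n \<Rightarrow> 'k)) \<Rightarrow> bool" where
  "leibniz m \<longleftrightarrow> bilin m \<and>
     (\<forall>x y z. m x (m y z) = vadd (m (m x y) z) (m y (m x z)))"

definition is_rep :: "(('n \<Rightarrow> 'k::field) \<Rightarrow> ('n \<Rightarrow> 'k) \<Rightarrow> ('n \<Rightarrow> 'k))
   \<Rightarrow> (('n \<Rightarrow> 'k) \<Rightarrow> ('v \<Rightarrow> 'k) \<Rightarrow> ('v \<Rightarrow> 'k))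
   \<Rightarrow> (('n \<Rightarrow> 'k) \<Rightarrow> ('v \<Rightarrow> 'k) \<Rightarrow> ('v \<Rightarrow> 'k)) \<Rightarrow> bool" where
  "is_rep m l r \<longleftrightarrow> bilin l \<and> bilin r \<and>
     (\<forall>x y v. l (m x y) v = vadd (l x (l y v)) (vneg (l y (l x v)))) \<and>
     (\<forall>x y v. r (m x y) v = vadd (l x (r y v)) (vneg (r y (l x v)))) \<and>
     (\<forall>x y v. r y (l x v) = vneg (r y (r x v)))"

definition anti_pre_leibniz :: "(('n \<Rightarrow> 'k::field) \<Rightarrow> ('n \<Rightarrow> 'k) \<Rightarrow> ('n \<Rightarrow> 'k))
   \<Rightarrow> (('n \<Rightarrow> 'k) \<Rightarrow> ('n \<Rightarrow> 'k) \<Rightarrow> ('n \<Rightarrow> 'k)) \<Rightarrow> bool" where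
  "anti_pre_leibniz sc pc \<longleftrightarrow> bilin sc \<and> bilin pc \<and>
     (let cm = (\<lambda>x y. vadd (sc x y) (pc x y)) in
     (\<forall>x y z. pc (cm x y) z = vadd (sc x (cm y z)) (vneg (sc y (cm x z)))) \<and>
     (\<forall>x y z. sc (cm x y) z = vadd (sc y (sc x z)) (vneg (sc x (sc y z)))) \<and>
     (\<forall>x y z. pc x (cm y z) = vadd (pc (sc y x) z) (vneg (sc y (pc x z)))) \<and>
     (\<forall>x y z. pc (sc x y) z = vneg (pc (pc y x) z)))"

definition fstc :: "('n + 'n \<Rightarrow> 'k) \<Rightarrow> ('n \<Rightarrow> 'k)" where "fstc X = (\<lambda>i. X (Inl i))"
definition sndc :: "('n + 'n \<Rightarrow> 'k) \<Rightarrow> ('n \<Rightarrow> 'k)" where "sndc X = (\<lambda>i. X (Inr i))"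

definition dsum_mult :: "(('n \<Rightarrow> 'k::field) \<Rightarrow> ('n \<Rightarrow> 'k) \<Rightarrow> ('n \<Rightarrow> 'k))
   \<Rightarrow> (('n \<Rightarrow> 'k) \<Rightarrow> ('n \<Rightarrow> 'k) \<Rightarrow> ('n \<Rightarrow> 'k))
   \<Rightarrow> (('n \<Rightarrow> 'k) \<Rightarrow> ('n \<Rightarrow> 'k) \<Rightarrow> ('n \<Rightarrow> 'k))
   \<Rightarrow> ('n + 'n \<Rightarrow> 'k) \<Rightarrow> ('n + 'n \<Rightarrow> 'k) \<Rightarrow> ('n + 'n \<Rightarrow> 'k)" where
  "dsum_mult m l r X Y =
     case_sum (m (fstc X) (fstc Y)) (vadd (l (fstc X) (sndc Y)) (r (fstc Y) (sndc X)))"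

definition omega_p :: "('n::finite + 'n \<Rightarrow> 'k::field) \<Rightarrow> ('n + 'n \<Rightarrow> 'k) \<Rightarrow> 'k" where
  "omega_p X Y = dpair (fstc X) (sndc Y) - dpair (fstc Y) (sndc X)"

definition cocycle :: "(('m \<Rightarrow> 'k::field) \<Rightarrow> ('m \<Rightarrow> 'k) \<Rightarrow> ('m \<Rightarrow> 'k))
   \<Rightarrow> (('m \<Rightarrow> 'k) \<Rightarrow> ('m \<Rightarrow> 'k) \<Rightarrow> 'k) \<Rightarrow> bool" where
  "cocycle m w \<longleftrightarrow> (\<forall>x y z. w z (m x y) = w x (vadd (m y z) (m z y)) - w y (m x z))"

definition skew_sym :: "('m \<Rightarrow> 'm \<Rightarrow> 'k::field) \<Rightarrow> bool" where
  "skew_sym w \<longleftrightarrow> (\<forall>x y. w x y = - w y x)"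

definition nondegenerate :: "(('m \<Rightarrow> 'k::field) \<Rightarrow> ('m \<Rightarrow> 'k) \<Rightarrow> 'k) \<Rightarrow> bool" where
  "nondegenerate w \<longleftrightarrow> (\<forall>x. (\<forall>y. w x y = 0) \<longrightarrow> x = vzero)"

end

theory Submission
  imports Defs "HOL-Library.Function_Algebras"
begin

text \<open>
  Write \<open>\<succ>, \<prec>\<close> for \<open>sc, pc\<close> and \<open>\<circ> = \<succ> + \<prec>\<close>. The operators \<open>l = -L*\<^sub>\<succ>\<close> and
  \<open>r = L*\<^sub>\<succ> + R*\<^sub>\<prec>\<close> on \<open>A*\<close> are characterised by their transposes
  \<open>\<langle>w, l x b\<rangle> = \<langle>x \<succ> w, b\<rangle>\<close> and \<open>\<langle>w, r y a\<rangle> = -\<langle>y \<succ> w + w \<prec> y, a\<rangle>\<close>, and for any such pair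
  \<open>\<omega>\<^sub>p\<close> is a 2-cocycle on \<open>A \<oplus> A*\<close>, whatever \<open>\<succ>\<close> and \<open>\<prec>\<close> are. Transposing the three
  representation axioms for \<open>(l, r)\<close> turns them into (AL2), (AL3) (given (AL2)) and (AL4); and
  under these three axioms the Leibniz defect of \<open>\<circ>\<close> is twice the defect of (AL1). So in
  characteristic zero, \<open>(\<succ>, \<prec>)\<close> is anti-pre-Leibniz iff \<open>\<circ>\<close> is Leibniz and \<open>(l, r)\<close> is a
  representation, and part (a) follows by forming the semidirect product. For part (b), \<open>\<succ>\<close> is
  obtained by transposing the given \<open>l\<close> and \<open>\<prec>\<close> is \<open>\<circ> - \<succ>\<close>; the cocycle condition at
  \<open>(z, 0), (x, 0), (0, b)\<close> is then exactly the transpose identity for \<open>r\<close>.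
\<close>

lemma vadd_eq_plus: "vadd = (+)"
  by (simp add: vadd_def fun_eq_iff)

lemma vneg_eq_uminus: "vneg = uminus"
  by (simp add: vneg_def fun_eq_iff)

lemma vzero_eq_zero: "vzero = 0"
  by (simp add: vzero_def fun_eq_iff)

lemma vscale_apply: "vscale c x i = c * x i"
  by (simp add: vscale_def)

lemma vscale_zero_left [simp]: "vscale 0 x = 0"
  by (simp add: vscale_def fun_eq_iff)

lemma vscale_add_right: "vscale c (x + y) = vscale c x + vscale c y"
  by (simp add: vscale_def fun_eq_iff algebra_simps)

lemma vscale_diff_right: "vscale c (x - y) = vscale c x - vscale c y"
  by (simp add: vscale_def fun_eq_iff algebra_simps)

lemma lin_add: "lin f \<Longrightarrow> f (x + y) = f x + f y"
  by (simp add: lin_def vadd_eq_plus)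

lemma lin_scale: "lin f \<Longrightarrow> f (vscale c x) = vscale c (f x)"
  by (simp add: lin_def)

context
  fixes f :: "('n \<Rightarrow> 'k::field) \<Rightarrow> ('m \<Rightarrow> 'k)"
  assumes f: "lin f"
begin

lemma lin_zero: "f 0 = 0"
  using lin_scale [OF f, of 0] by simp

lemma lin_minus: "f (- x) = - f x"
  using lin_add [OF f, of "- x" x] lin_zero by (simp add: eq_neg_iff_add_eq_0)

lemma lin_diff: "f (x - y) = f x - f y"
  using lin_add [OF f, of x "- y"] lin_minus [of y] by simp

lemma lin_sum: "f (sum g S) = (\<Sum>j\<in>S. f (g j))"
  by (induction S rule: infinite_finite_induct)
    (simp_all add: lin_zero lin_add [OF f] del: plus_fun_apply zero_fun_apply)

end

lemma sum_fun_apply: "sum g S i = (\<Sum>j\<in>S. g j i)"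
  by (induction S rule: infinite_finite_induct) auto

lemma vec_eq_sum_unitv: "(x :: 'n::finite \<Rightarrow> 'k::field) = (\<Sum>j\<in>UNIV. vscale (x j) (unitv j))"
  by (auto simp: fun_eq_iff vscale_def unitv_def sum_fun_apply if_distrib cong: if_cong)

lemma lin_apply_eq_sum:
  fixes f :: "('n::finite \<Rightarrow> 'k::field) \<Rightarrow> ('m \<Rightarrow> 'k)"
  assumes f: "lin f"
  shows "f x i = (\<Sum>j\<in>UNIV. x j * f (unitv j) i)"
proof -
  have "f x = f (\<Sum>j\<in>UNIV. vscale (x j) (unitv j))"
    by (subst vec_eq_sum_unitv) (rule refl)
  also have "\<dots> = (\<Sum>j\<in>UNIV. vscale (x j) (f (unitv j)))"
    by (simp add: lin_sum [OF f] lin_scale [OF f])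
  finally show ?thesis
    by (simp add: sum_fun_apply vscale_def)
qed

lemma bilin_lin_right: "bilin m \<Longrightarrow> lin (m x)"
  by (simp add: bilin_def)

lemma bilin_lin_left: "bilin m \<Longrightarrow> lin (\<lambda>x. m x y)"
  by (simp add: bilin_def)

lemma bilinI:
  assumes "\<And>x y z. m (x + y) z = m x z + m y z" and "\<And>x y z. m z (x + y) = m z x + m z y"
    and "\<And>c x z. m (vscale c x) z = vscale c (m x z)" and "\<And>c x z. m z (vscale c x) = vscale c (m z x)"
  shows "bilin m"
  using assms by (simp add: bilin_def lin_def vadd_eq_plus)

context
  fixes m :: "('n \<Rightarrow> 'k::field) \<Rightarrow> ('q \<Rightarrow> 'k) \<Rightarrow> ('p \<Rightarrow> 'k)"
  assumes m: "bilin m"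
begin

lemma bilin_add_left: "m (x + y) z = m x z + m y z"
  using lin_add [OF bilin_lin_left [OF m]] .

lemma bilin_add_right: "m z (x + y) = m z x + m z y"
  using lin_add [OF bilin_lin_right [OF m]] .

lemma bilin_minus_left: "m (- x) z = - m x z"
  using lin_minus [OF bilin_lin_left [OF m]] .

lemma bilin_minus_right: "m z (- x) = - m z x"
  using lin_minus [OF bilin_lin_right [OF m]] .

lemma bilin_diff_left: "m (x - y) z = m x z - m y z"
  using lin_diff [OF bilin_lin_left [OF m]] .

lemma bilin_diff_right: "m z (x - y) = m z x - m z y"
  using lin_diff [OF bilin_lin_right [OF m]] .

lemma bilin_zero_left: "m 0 z = 0"
  using lin_zero [OF bilin_lin_left [OF m]] .

lemma bilin_zero_right: "m z 0 = 0"
  using lin_zero [OF bilin_lin_right [OF m]] .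

lemma bilin_scale_left: "m (vscale c x) z = vscale c (m x z)"
  using lin_scale [OF bilin_lin_left [OF m]] .

lemma bilin_scale_right: "m z (vscale c x) = vscale c (m z x)"
  using lin_scale [OF bilin_lin_right [OF m]] .

lemmas bilin_simps = bilin_add_left bilin_add_right bilin_minus_left bilin_minus_right
  bilin_diff_left bilin_diff_right bilin_zero_left bilin_zero_right bilin_scale_left bilin_scale_right

end

lemma dpair_add_left: "dpair (x + y) a = dpair x a + dpair y a"
  by (simp add: dpair_def algebra_simps sum.distrib)

lemma dpair_add_right: "dpair x (a + b) = dpair x a + dpair x b"
  by (simp add: dpair_def algebra_simps sum.distrib)

lemma dpair_minus_left: "dpair (- x) a = - dpair x a"
  by (simp add: dpair_def sum_negf)

lemma dpair_minus_right: "dpair x (- a) = - dpair x a"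
  by (simp add: dpair_def sum_negf)

lemma dpair_diff_left: "dpair (x - y) a = dpair x a - dpair y a"
  by (simp add: dpair_def algebra_simps sum_subtractf)

lemma dpair_diff_right: "dpair x (a - b) = dpair x a - dpair x b"
  by (simp add: dpair_def algebra_simps sum_subtractf)

lemma dpair_zero_left: "dpair 0 a = 0"
  by (simp add: dpair_def)

lemma dpair_zero_right: "dpair x 0 = 0"
  by (simp add: dpair_def)

lemma dpair_scale_left: "dpair (vscale c x) a = c * dpair x a"
  by (simp add: dpair_def vscale_def sum_distrib_left algebra_simps)

lemma dpair_scale_right: "dpair x (vscale c a) = c * dpair x a"
  by (simp add: dpair_def vscale_def sum_distrib_left algebra_simps)

lemmas dpair_simps = dpair_add_left dpair_add_right dpair_minus_left dpair_minus_right
  dpair_diff_left dpair_diff_right dpair_zero_left dpair_zero_right dpair_scale_left dpair_scale_right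

lemma dpair_unitv_left: "dpair (unitv j) a = a j"
proof -
  have "\<And>i. unitv j i * a i = (if j = i then a j else 0)"
    by (simp add: unitv_def)
  then show ?thesis
    by (simp add: dpair_def)
qed

lemma dpair_unitv_right: "dpair x (unitv j) = x j"
proof -
  have "\<And>i. x i * unitv j i = (if j = i then x j else 0)"
    by (simp add: unitv_def)
  then show ?thesis
    by (simp add: dpair_def)
qed

lemma dpair_ext_right: "(\<And>w. dpair w a = dpair w b) \<Longrightarrow> a = b"
  by (metis dpair_unitv_left ext)

lemma dpair_ext_left: "(\<And>a. dpair x a = dpair y a) \<Longrightarrow> x = y"
  by (metis dpair_unitv_right ext)

lemma transpose_eq_zero_iff:
  assumes "\<And>w v. dpair w (F v) = dpair (G w) v"
  shows "(\<forall>v. F v = 0) \<longleftrightarrow> (\<forall>w. G w = 0)"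
  by (metis assms dpair_ext_left dpair_ext_right dpair_zero_left dpair_zero_right)

lemma dpair_dual_op:
  assumes "lin (f y)"
  shows "dpair w (dual_op f y u) = - dpair (f y w) u"
proof -
  have "dpair w (dual_op f y u) = - (\<Sum>i\<in>UNIV. \<Sum>j\<in>UNIV. w j * f y (unitv j) i * u i)"
    unfolding dpair_def dual_op_def
    by (subst sum.swap) (simp add: sum_distrib_left sum_negf algebra_simps)
  also have "\<dots> = - dpair (f y w) u"
    by (simp add: dpair_def lin_apply_eq_sum [OF assms, of w] sum_distrib_right)
  finally show ?thesis .
qed

lemma dpair_transpose:
  assumes "lin g"
  shows "dpair (\<lambda>i. dpair z (g (unitv i))) b = dpair z (g b)"
proof -
  have "dpair (\<lambda>i. dpair z (g (unitv i))) b = (\<Sum>j\<in>UNIV. z j * (\<Sum>i\<in>UNIV. b i * g (unitv i) j))"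
    unfolding dpair_def sum_distrib_right sum_distrib_left
    by (subst sum.swap) (simp add: algebra_simps)
  also have "\<dots> = dpair z (g b)"
    by (simp add: dpair_def lin_apply_eq_sum [OF assms, of b])
  finally show ?thesis .
qed

lemma fstc_zero [simp]: "fstc 0 = 0"
  by (simp add: fstc_def fun_eq_iff)

lemma sndc_zero [simp]: "sndc 0 = 0"
  by (simp add: sndc_def fun_eq_iff)

lemma fstc_plus [simp]: "fstc (X + Y) = fstc X + fstc Y"
  by (simp add: fstc_def fun_eq_iff)

lemma sndc_plus [simp]: "sndc (X + Y) = sndc X + sndc Y"
  by (simp add: sndc_def fun_eq_iff)

lemma fstc_vscale [simp]: "fstc (vscale c X) = vscale c (fstc X)"
  by (simp add: fstc_def vscale_def fun_eq_iff)

lemma sndc_vscale [simp]: "sndc (vscale c X) = vscale c (sndc X)"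
  by (simp add: sndc_def vscale_def fun_eq_iff)

lemma fstc_case_sum [simp]: "fstc (case_sum x a) = x"
  by (simp add: fstc_def)

lemma sndc_case_sum [simp]: "sndc (case_sum x a) = a"
  by (simp add: sndc_def)

lemma fstc_dsum_mult [simp]: "fstc (dsum_mult m l r X Y) = m (fstc X) (fstc Y)"
  by (simp add: dsum_mult_def)

lemma sndc_dsum_mult [simp]: "sndc (dsum_mult m l r X Y) = l (fstc X) (sndc Y) + r (fstc Y) (sndc X)"
  by (simp add: dsum_mult_def vadd_eq_plus)

lemma dsum_eqI:
  assumes "fstc X = fstc Y" and "sndc X = sndc Y"
  shows "X = Y"
proof
  fix s
  show "X s = Y s"
    using assms by (cases s) (auto simp: fstc_def sndc_def fun_eq_iff)
qed

lemma leibniz_dsum_mult: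
  assumes "leibniz m" and "is_rep m l r"
  shows "leibniz (dsum_mult m l r)"
proof -
  have m: "bilin m" and l: "bilin l" and r: "bilin r"
    using assms unfolding leibniz_def is_rep_def by blast+
  have m_leibniz: "m x (m y z) = m (m x y) z + m y (m x z)" for x y z
    using assms(1) unfolding leibniz_def vadd_eq_plus by blast
  have l_rep: "l (m x y) v = l x (l y v) - l y (l x v)"
    and r_rep: "r (m x y) v = l x (r y v) - r y (l x v)"
    and r_l: "r y (l x v) = - r y (r x v)" for x y v
    using assms(2) unfolding is_rep_def vadd_eq_plus vneg_eq_uminus diff_conv_add_uminus by blast+
  let ?d = "dsum_mult m l r"
  have "bilin ?d"
    by (rule bilinI; rule dsum_eqI)
      (simp_all add: bilin_simps [OF m] bilin_simps [OF l] bilin_simps [OF r] vscale_add_right fun_eq_iff)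
  moreover have "?d X (?d Y Z) = ?d (?d X Y) Z + ?d Y (?d X Z)" for X Y Z
  proof (rule dsum_eqI)
    show "fstc (?d X (?d Y Z)) = fstc (?d (?d X Y) Z + ?d Y (?d X Z))"
      unfolding fstc_dsum_mult fstc_plus by (rule m_leibniz)
    show "sndc (?d X (?d Y Z)) = sndc (?d (?d X Y) Z + ?d Y (?d X Z))"
      by (simp only: sndc_dsum_mult fstc_dsum_mult sndc_plus fstc_plus
          bilin_simps [OF l] bilin_simps [OF r] l_rep r_rep r_l)
        (simp add: fun_eq_iff algebra_simps)
  qed
  ultimately show ?thesis
    unfolding leibniz_def vadd_eq_plus by blast
qed

lemma bilin_form_omega_p: "bilin_form omega_p"
  by (simp add: bilin_form_def omega_p_def vadd_eq_plus dpair_simps algebra_simps)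

lemma skew_sym_omega_p: "skew_sym omega_p"
  by (simp add: skew_sym_def omega_p_def)

lemma nondegenerate_omega_p: "nondegenerate omega_p"
  unfolding nondegenerate_def vzero_eq_zero
proof (intro allI impI)
  fix X :: "'n::finite + 'n \<Rightarrow> 'k::field"
  assume X: "\<forall>Y. omega_p X Y = 0"
  show "X = 0"
  proof (rule dsum_eqI)
    show "fstc X = fstc 0"
    proof
      fix j
      show "fstc X j = fstc 0 j"
        using X [rule_format, of "case_sum 0 (unitv j)"]
        by (simp add: omega_p_def dpair_unitv_right dpair_zero_left)
    qed
    show "sndc X = sndc 0"
    proof
      fix j
      show "sndc X j = sndc 0 j"
        using X [rule_format, of "case_sum (unitv j) 0"]
        by (simp add: omega_p_def dpair_unitv_left dpair_zero_right)
    qed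
  qed
qed

lemma cocycle_omega_p_dpair:
  assumes m: "bilin m" and l: "bilin l" and r: "bilin r"
    and "cocycle (dsum_mult m l r) omega_p"
  shows "dpair z (l x b) = dpair x (r z b) + dpair x (l z b) + dpair (m x z) b"
proof -
  let ?d = "dsum_mult m l r"
  have "omega_p (case_sum z 0) (?d (case_sum x 0) (case_sum 0 b)) =
      omega_p (case_sum x 0) (?d (case_sum 0 b) (case_sum z 0) + ?d (case_sum z 0) (case_sum 0 b))
      - omega_p (case_sum 0 b) (?d (case_sum x 0) (case_sum z 0))"
    using assms(4) unfolding cocycle_def vadd_eq_plus by blast
  then show ?thesis
    by (simp add: omega_p_def dpair_simps bilin_zero_left [OF m] bilin_zero_right [OF m]
      bilin_zero_left [OF l] bilin_zero_right [OF l] bilin_zero_left [OF r] bilin_zero_right [OF r]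
      algebra_simps)
qed

lemma Lmul_eq: "Lmul m = m"
  by (simp add: Lmul_def fun_eq_iff)

lemma Rmul_eq: "Rmul m = (\<lambda>x y. m y x)"
  by (simp add: Rmul_def fun_eq_iff)

lemma dpair_neg_dual_op_Lmul:
  "bilin sc \<Longrightarrow> dpair w (- dual_op (Lmul sc) x b) = dpair (sc x w) b"
  by (simp add: Lmul_eq dpair_minus_right dpair_dual_op bilin_lin_right)

lemma dpair_dual_op_Lmul_Rmul:
  "bilin sc \<Longrightarrow> bilin pc \<Longrightarrow>
    dpair w (dual_op (Lmul sc) y a + dual_op (Rmul pc) y a) = - dpair (sc y w) a - dpair (pc w y) a"
  by (simp add: Lmul_eq Rmul_eq dpair_add_right dpair_dual_op bilin_lin_right bilin_lin_left)

locale adjoint_operators =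
  fixes sc pc m l r :: "('n::finite \<Rightarrow> 'k::field) \<Rightarrow> ('n \<Rightarrow> 'k) \<Rightarrow> ('n \<Rightarrow> 'k)"
  assumes bilin_sc: "bilin sc" and bilin_pc: "bilin pc"
    and m_eq: "\<And>x y. m x y = sc x y + pc x y"
    and l_adjoint: "\<And>w x b. dpair w (l x b) = dpair (sc x w) b"
    and r_adjoint: "\<And>w y a. dpair w (r y a) = - dpair (sc y w) a - dpair (pc w y) a"
begin

definition "AL1 \<longleftrightarrow> (\<forall>x y z. pc (m x y) z = sc x (m y z) - sc y (m x z))"
definition "AL2 \<longleftrightarrow> (\<forall>x y z. sc (m x y) z = sc y (sc x z) - sc x (sc y z))"
definition "AL3 \<longleftrightarrow> (\<forall>x y z. pc x (m y z) = pc (sc y x) z - sc y (pc x z))"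
definition "AL4 \<longleftrightarrow> (\<forall>x y z. pc (sc x y) z = - pc (pc y x) z)"

lemma anti_pre_leibniz_iff: "anti_pre_leibniz sc pc \<longleftrightarrow> AL1 \<and> AL2 \<and> AL3 \<and> AL4"
proof -
  have m_eq': "(\<lambda>x y. vadd (sc x y) (pc x y)) = m"
    by (simp add: fun_eq_iff m_eq vadd_eq_plus)
  show ?thesis
    unfolding anti_pre_leibniz_def Let_def m_eq' AL1_def AL2_def AL3_def AL4_def
    by (simp add: bilin_sc bilin_pc vadd_eq_plus vneg_eq_uminus)
qed

lemma bilin_m: "bilin m"
  by (rule bilinI) (simp_all add: m_eq bilin_simps [OF bilin_sc] bilin_simps [OF bilin_pc] vscale_add_right)

lemma bilin_l: "bilin l"
  by (rule bilinI; rule dpair_ext_right)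
    (simp_all add: l_adjoint dpair_simps bilin_add_left [OF bilin_sc] bilin_scale_left [OF bilin_sc])

lemma bilin_r: "bilin r"
  by (rule bilinI; rule dpair_ext_right)
    (simp_all add: r_adjoint dpair_simps bilin_add_left [OF bilin_sc] bilin_add_right [OF bilin_pc]
      bilin_scale_left [OF bilin_sc] bilin_scale_right [OF bilin_pc] algebra_simps)

lemma l_eq_dual_op: "l x = (\<lambda>b. - dual_op (Lmul sc) x b)"
  by (rule ext, rule dpair_ext_right) (simp add: l_adjoint dpair_neg_dual_op_Lmul [OF bilin_sc])

lemma r_eq_dual_op: "r y = (\<lambda>a. dual_op (Lmul sc) y a + dual_op (Rmul pc) y a)"
  by (rule ext, rule dpair_ext_right) (simp add: r_adjoint dpair_dual_op_Lmul_Rmul [OF bilin_sc bilin_pc])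

lemma dpair_m_left: "dpair (m x y) a = dpair (sc x y) a + dpair (pc x y) a"
  by (simp add: m_eq dpair_add_left)

lemma cocycle_omega_p: "cocycle (dsum_mult m l r) omega_p"
  unfolding cocycle_def omega_p_def vadd_eq_plus
  by (simp add: dpair_m_left l_adjoint r_adjoint dpair_simps bilin_simps [OF bilin_sc] bilin_simps [OF bilin_pc])

lemma l_rep_iff_AL2: "(\<forall>x y v. l (m x y) v = l x (l y v) - l y (l x v)) \<longleftrightarrow> AL2"
proof -
  have "(\<forall>v. l (m x y) v - (l x (l y v) - l y (l x v)) = 0) \<longleftrightarrow>
      (\<forall>w. sc (m x y) w - (sc y (sc x w) - sc x (sc y w)) = 0)" for x y
    by (rule transpose_eq_zero_iff) (simp add: l_adjoint dpair_simps)
  then show ?thesis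
    unfolding AL2_def right_minus_eq by blast
qed

lemma r_rep_iff_AL3:
  assumes AL2
  shows "(\<forall>x y v. r (m x y) v = l x (r y v) - r y (l x v)) \<longleftrightarrow> AL3"
proof -
  have "(\<forall>v. r (m x y) v - (l x (r y v) - r y (l x v)) = 0) \<longleftrightarrow>
      (\<forall>w. - (pc w (m x y) - (pc (sc x w) y - sc x (pc w y))) = 0)" for x y
    using assms unfolding AL2_def
    by (intro transpose_eq_zero_iff) (simp add: l_adjoint r_adjoint dpair_simps)
  then show ?thesis
    unfolding AL3_def right_minus_eq neg_equal_0_iff_equal by blast
qed

lemma r_l_iff_AL4: "(\<forall>x y v. r y (l x v) = - r y (r x v)) \<longleftrightarrow> AL4"
proof -
  have "(\<forall>v. r y (l x v) + r y (r x v) = 0) \<longleftrightarrow> (\<forall>w. pc (sc y w) x + pc (pc w y) x = 0)" for x y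
    by (rule transpose_eq_zero_iff)
      (simp add: l_adjoint r_adjoint dpair_simps bilin_add_left [OF bilin_pc])
  then show ?thesis
    unfolding AL4_def eq_neg_iff_add_eq_0 by blast
qed

lemma is_rep_iff: "is_rep m l r \<longleftrightarrow> AL2 \<and> AL3 \<and> AL4"
proof -
  have "is_rep m l r \<longleftrightarrow>
      (\<forall>x y v. l (m x y) v = l x (l y v) - l y (l x v)) \<and>
      (\<forall>x y v. r (m x y) v = l x (r y v) - r y (l x v)) \<and>
      (\<forall>x y v. r y (l x v) = - r y (r x v))"
    unfolding is_rep_def vadd_eq_plus vneg_eq_uminus diff_conv_add_uminus
    using bilin_l bilin_r by blast
  then show ?thesis
    using l_rep_iff_AL2 r_rep_iff_AL3 r_l_iff_AL4 by blast
qed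

lemma leibniz_defect_eq:
  assumes AL2 AL3 AL4
  shows "m x (m y z) - (m (m x y) z + m y (m x z)) = 2 * (sc x (m y z) - sc y (m x z) - pc (m x y) z)"
proof -
  have sc_m: "sc x (m y z) = sc x (sc y z) + sc x (pc y z)" for x y z
    by (simp add: m_eq bilin_add_right [OF bilin_sc])
  have pc_m: "pc (m x y) z = pc (sc x y) z + pc (pc x y) z" for x y z
    by (simp add: m_eq bilin_add_left [OF bilin_pc])
  have xyz: "m x (m y z) = sc x (m y z) + (pc (sc y x) z - sc y (pc x z))"
    using m_eq [of x "m y z"] \<open>AL3\<close> by (simp add: AL3_def)
  have xy_z: "m (m x y) z = (sc y (sc x z) - sc x (sc y z)) + pc (m x y) z"
    using m_eq [of "m x y" z] \<open>AL2\<close> by (simp add: AL2_def)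
  have yxz: "m y (m x z) = sc y (m x z) + (pc (sc x y) z - sc x (pc y z))"
    using m_eq [of y "m x z"] \<open>AL3\<close> by (simp add: AL3_def)
  have yx_z: "pc (sc y x) z = - pc (pc x y) z"
    using \<open>AL4\<close> by (simp add: AL4_def)
  show ?thesis
    unfolding xyz xy_z yxz yx_z sc_m pc_m by (simp add: fun_eq_iff algebra_simps)
qed

end

lemma anti_pre_leibniz_iff_leibniz_rep:
  fixes sc pc m l r :: "('n::finite \<Rightarrow> 'k::field_char_0) \<Rightarrow> ('n \<Rightarrow> 'k) \<Rightarrow> ('n \<Rightarrow> 'k)"
  assumes "adjoint_operators sc pc m l r"
  shows "anti_pre_leibniz sc pc \<longleftrightarrow> leibniz m \<and> is_rep m l r"
proof -
  interpret adjoint_operators sc pc m l r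
    by fact
  have double_eq_0_iff: "2 * D = 0 \<longleftrightarrow> D = 0" for D :: "'n \<Rightarrow> 'k"
    by (simp add: fun_eq_iff)
  have "leibniz m \<longleftrightarrow> AL1" if AL2 AL3 AL4
  proof -
    have "leibniz m \<longleftrightarrow> (\<forall>x y z. m x (m y z) - (m (m x y) z + m y (m x z)) = 0)"
      unfolding leibniz_def vadd_eq_plus right_minus_eq using bilin_m by blast
    also have "\<dots> \<longleftrightarrow> (\<forall>x y z. sc x (m y z) - sc y (m x z) - pc (m x y) z = 0)"
      unfolding leibniz_defect_eq [OF that] double_eq_0_iff ..
    also have "\<dots> \<longleftrightarrow> AL1"
      unfolding AL1_def diff_eq_eq by (metis add.left_neutral eq_diff_eq)
    finally show ?thesis .
  qed
  then show ?thesis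
    using anti_pre_leibniz_iff is_rep_iff by blast
qed

lemma leibniz_cocycle_dual_dsum_mult:
  fixes sc pc :: "('n::finite \<Rightarrow> 'k::field_char_0) \<Rightarrow> ('n \<Rightarrow> 'k) \<Rightarrow> ('n \<Rightarrow> 'k)"
  assumes apl: "anti_pre_leibniz sc pc"
  defines "d \<equiv> dsum_mult (\<lambda>x y. sc x y + pc x y) (\<lambda>x b. - dual_op (Lmul sc) x b)
    (\<lambda>y a. dual_op (Lmul sc) y a + dual_op (Rmul pc) y a)"
  shows "leibniz d \<and> cocycle d omega_p"
proof -
  have "bilin sc" and "bilin pc"
    using apl by (simp_all add: anti_pre_leibniz_def)
  then have adj: "adjoint_operators sc pc (\<lambda>x y. sc x y + pc x y) (\<lambda>x b. - dual_op (Lmul sc) x b)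
    (\<lambda>y a. dual_op (Lmul sc) y a + dual_op (Rmul pc) y a)"
    by unfold_locales (simp_all add: dpair_neg_dual_op_Lmul dpair_dual_op_Lmul_Rmul)
  show ?thesis
    unfolding d_def
    using apl anti_pre_leibniz_iff_leibniz_rep [OF adj] leibniz_dsum_mult
      adjoint_operators.cocycle_omega_p [OF adj] by blast
qed

lemma anti_pre_leibniz_of_cocycle:
  fixes m l r :: "('n::finite \<Rightarrow> 'k::field_char_0) \<Rightarrow> ('n \<Rightarrow> 'k) \<Rightarrow> ('n \<Rightarrow> 'k)"
  assumes leib: "leibniz m" and rep: "is_rep m l r" and cocycle: "cocycle (dsum_mult m l r) omega_p"
  shows "\<exists>sc pc. anti_pre_leibniz sc pc \<and> (\<forall>x y. sc x y + pc x y = m x y) \<and>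
    (\<forall>x. l x = (\<lambda>b. - dual_op (Lmul sc) x b)) \<and>
    (\<forall>y. r y = (\<lambda>a. dual_op (Lmul sc) y a + dual_op (Rmul pc) y a))"
proof -
  have m: "bilin m" and l: "bilin l" and r: "bilin r"
    using leib rep unfolding leibniz_def is_rep_def by blast+
  define sc where "sc x z = (\<lambda>i. dpair z (l x (unitv i)))" for x z
  define pc where "pc x y = m x y - sc x y" for x y
  have bilin_sc: "bilin sc"
    unfolding sc_def
    by (rule bilinI) (simp_all add: fun_eq_iff dpair_simps bilin_add_left [OF l] bilin_scale_left [OF l] vscale_apply)
  have bilin_pc: "bilin pc"
    unfolding pc_def
    by (rule bilinI) (simp_all add: bilin_simps [OF m] bilin_simps [OF bilin_sc] vscale_diff_right)
  have l_adjoint: "dpair w (l x b) = dpair (sc x w) b" for w x b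
    unfolding sc_def by (rule dpair_transpose [OF bilin_lin_right [OF l], symmetric])
  have "dpair w (r y a) = - dpair (sc y w) a - dpair (pc w y) a" for w y a
    using cocycle_omega_p_dpair [OF m l r cocycle, of y w a]
    by (simp add: pc_def dpair_diff_left l_adjoint)
  with bilin_sc bilin_pc l_adjoint have adj: "adjoint_operators sc pc m l r"
    by unfold_locales (simp_all add: pc_def)
  show ?thesis
  proof (intro exI conjI allI)
    show "anti_pre_leibniz sc pc"
      using anti_pre_leibniz_iff_leibniz_rep [OF adj] leib rep by blast
    show "sc x y + pc x y = m x y" for x y
      by (simp add: pc_def)
    show "l x = (\<lambda>b. - dual_op (Lmul sc) x b)" for x
      by (rule adjoint_operators.l_eq_dual_op [OF adj])
    show "r y = (\<lambda>a. dual_op (Lmul sc) y a + dual_op (Rmul pc) y a)" for y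
      by (rule adjoint_operators.r_eq_dual_op [OF adj])
  qed
qed

theorem proposition2p16:
  fixes sc pc m :: "('n::finite \<Rightarrow> 'k::field_char_0) \<Rightarrow> ('n \<Rightarrow> 'k) \<Rightarrow> ('n \<Rightarrow> 'k)"
    and l r :: "('n \<Rightarrow> 'k) \<Rightarrow> ('n \<Rightarrow> 'k) \<Rightarrow> ('n \<Rightarrow> 'k)"
  shows
   "(anti_pre_leibniz sc pc \<longrightarrow>
      (let dm = dsum_mult (\<lambda>x y. vadd (sc x y) (pc x y))
                 (\<lambda>x b. vneg (dual_op (Lmul sc) x b))
                 (\<lambda>y a. vadd (dual_op (Lmul sc) y a) (dual_op (Rmul pc) y a))
       in leibniz dm \<and> bilin_form omega_p \<and> nondegenerate omega_p \<and> skew_sym omega_p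
          \<and> cocycle dm omega_p))
    \<and>
    (leibniz m \<and> is_rep m l r \<and> cocycle (dsum_mult m l r) omega_p \<longrightarrow>
      (\<exists>sc' pc'. anti_pre_leibniz sc' pc' \<and> (\<forall>x y. vadd (sc' x y) (pc' x y) = m x y) \<and>
         (\<forall>x. l x = (\<lambda>b. vneg (dual_op (Lmul sc') x b))) \<and>
         (\<forall>y. r y = (\<lambda>a. vadd (dual_op (Lmul sc') y a) (dual_op (Rmul pc') y a)))))"
  unfolding vadd_eq_plus vneg_eq_uminus Let_def
  using leibniz_cocycle_dual_dsum_mult anti_pre_leibniz_of_cocycle
    bilin_form_omega_p nondegenerate_omega_p skew_sym_omega_p by blast

end
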